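(* Let $C\subset\mathbb{R}^n$ be a nonempty compact path-wise connected set and let $f:C\to\mathbb{R}$ be a continuous function satisfying the Lipschitz condition, with Lipschitz constant $$M_0=\sup\Big\{\frac{|f(y)-f(x)|}{|y-x|}\ :\ x,y\in C,\ x\neq y\Big\}<\infty .$$ Let $v=\min_{x\in C}f(x)$ be the global minimum value of $f$ on $C$. Let $C=C_1\supset C_2\supset\cdots$ be the sequence of sets produced by the granular sieving (GrS) procedure with constant $M_0$ (described in the context), where the maximal diameters $\delta_k$ of the partition pieces satisfy $\delta_k\to 0$ as $k\to\infty$. Then $$\tilde C:=\bigcap_{k=1}^{\infty}C_k\neq\emptyset\qquad\text{and}\qquad f(\tilde C)=\{v\},$$ where $f(A)=\{f(a): a\in A\}$ for $A\subset C$.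
   Context: GrS procedure with constant $M>0$ (here $M=M_0$): set $C_1=C$. Given a compact set $C_k\subset C$, choose a finite partition $\mathbb{N}_k=\{C^{(k)}_l: l=1,\dots,l_k\}$ of $C_k$, i.e. $C_k=\bigcup_{l=1}^{l_k}C^{(k)}_l$, such that: each $C^{(k)}_l$ is compact (boundaries of different pieces may overlap); the partitions become finer, in the sense that each piece $C^{(k+1)}_{l'}$ of $\mathbb{N}_{k+1}$ is either entirely contained in a piece $C^{(k)}_l$ of $\mathbb{N}_k$ or has empty intersection with the interior of $C^{(k)}_l$; and in each piece a representative point ("center") $x^{(k)}_l\in C^{(k)}_l$ is chosen. Let $\delta_k$ be the maximal diameter of the pieces $C^{(k)}_l$, $l=1,\dots,l_k$ (diameter = maximal distance between two points of the set). Put $v_k=\min\{f(x^{(k)}_l): l=1,\dots,l_k\}$. A piece $C^{(k)}_l$ is called good if $f(x^{(k)}_l)\le v_k+\delta_k M$ and bad if $f(x^{(k)}_l)> v_k+\delta_k M$. Define $C_{k+1}$ to be the union of all good pieces of $\mathbb{N}_k$, and continue inductively. *)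

theory Defs
  imports "HOL-Analysis.Analysis"
begin

definition lip_ratios :: "('a::metric_space \<Rightarrow> real) \<Rightarrow> 'a set \<Rightarrow> real set" where
  "lip_ratios f C = {\<bar>f y - f x\<bar> / dist y x | x y. x \<in> C \<and> y \<in> C \<and> x \<noteq> y}"

text \<open>Steps are indexed by k \<ge> 1.  Cs k is the compact set C_k, L k = l_k is the number of
  pieces, P k l (1 \<le> l \<le> L k) are the pieces C^{(k)}_l, c k l their centers x^{(k)}_l,
  and \<delta> k the maximal diameter of the pieces of the k-th partition.\<close>
definition GrS ::
  "'a::euclidean_space set \<Rightarrow> ('a \<Rightarrow> real) \<Rightarrow> real \<Rightarrow> (nat \<Rightarrow> 'a set) \<Rightarrow> (nat \<Rightarrow> nat)
    \<Rightarrow> (nat \<Rightarrow> nat \<Rightarrow> 'a set) \<Rightarrow> (nat \<Rightarrow> nat \<Rightarrow> 'a) \<Rightarrow> (nat \<Rightarrow> real) \<Rightarrow> bool" where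
  "GrS C f M Cs L P c \<delta> \<longleftrightarrow>
     Cs 1 = C \<and>
     (\<forall>k\<ge>1.
        compact (Cs k) \<and> Cs k \<subseteq> C \<and>
        Cs k = (\<Union>l\<in>{1..L k}. P k l) \<and>
        (\<forall>l\<in>{1..L k}. compact (P k l) \<and> c k l \<in> P k l) \<and>
        (\<forall>l'\<in>{1..L (Suc k)}. \<forall>l\<in>{1..L k}.
            P (Suc k) l' \<subseteq> P k l \<or> P (Suc k) l' \<inter> interior (P k l) = {}) \<and>
        \<delta> k = Max ((\<lambda>l. diameter (P k l)) ` {1..L k}) \<and>
        Cs (Suc k) = (\<Union>l\<in>{l\<in>{1..L k}.
            f (c k l) \<le> Min ((\<lambda>l. f (c k l)) ` {1..L k}) + \<delta> k * M}. P k l))"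

end

theory Submission
  imports Defs
begin

text \<open>The global minimiser \<open>x\<^sub>0\<close> of \<open>f\<close> is never sieved out: the centre of the piece
  containing it has value at most \<open>v + M \<delta>\<^sub>k\<close>, and \<open>v\<close> is below the value at every centre,
  so that piece is good. Conversely a point of a good piece differs by at most \<open>M \<delta>\<^sub>k\<close> from its
  centre, whose value is within \<open>M \<delta>\<^sub>k\<close> of the smallest centre value, which in turn is within
  \<open>M \<delta>\<^sub>k\<close> of \<open>v\<close>. Hence every point of \<open>C\<^sub>k\<^sub>+\<^sub>1\<close> has value at most \<open>v + 3 M \<delta>\<^sub>k\<close>,
  and letting \<open>\<delta>\<^sub>k \<rightarrow> 0\<close> forces \<open>f = v\<close> on the intersection.\<close>

lemma lip_ratios_bound:
  fixes f :: "'a::metric_space \<Rightarrow> real"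
  assumes "bdd_above (lip_ratios f C)" and "x \<in> C" and "y \<in> C"
  shows "\<bar>f y - f x\<bar> \<le> Sup (lip_ratios f C) * dist y x"
proof (cases "x = y")
  case False
  then have "\<bar>f y - f x\<bar> / dist y x \<in> lip_ratios f C"
    unfolding lip_ratios_def using assms(2,3) by blast
  then have "\<bar>f y - f x\<bar> / dist y x \<le> Sup (lip_ratios f C)"
    using assms(1) by (rule cSup_upper)
  with False show ?thesis by (simp add: pos_divide_le_eq)
qed simp

definition mesh :: "('b \<Rightarrow> 'a::metric_space set) \<Rightarrow> 'b set \<Rightarrow> real" where
  "mesh P I = Max ((\<lambda>l. diameter (P l)) ` I)"

definition good_pieces ::
  "('a \<Rightarrow> real) \<Rightarrow> real \<Rightarrow> ('b \<Rightarrow> 'a::metric_space set) \<Rightarrow> ('b \<Rightarrow> 'a) \<Rightarrow> 'b set \<Rightarrow> 'b set" where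
  "good_pieces f M P c I = {l \<in> I. f (c l) \<le> Min ((\<lambda>l. f (c l)) ` I) + mesh P I * M}"

context
  fixes C :: "'a::metric_space set" and f :: "'a \<Rightarrow> real" and M :: real
    and I :: "'b set" and P :: "'b \<Rightarrow> 'a set" and c :: "'b \<Rightarrow> 'a"
  assumes lipschitz: "\<And>x y. x \<in> C \<Longrightarrow> y \<in> C \<Longrightarrow> \<bar>f y - f x\<bar> \<le> M * dist y x"
    and finite_pieces: "finite I"
    and pieces_subset: "\<And>l. l \<in> I \<Longrightarrow> P l \<subseteq> C"
    and pieces_bounded: "\<And>l. l \<in> I \<Longrightarrow> bounded (P l)"
    and centers: "\<And>l. l \<in> I \<Longrightarrow> c l \<in> P l"
begin

text \<open>A negative \<open>M\<close> (possible since \<open>Sup {}\<close> is unspecified) forces \<open>C\<close> to be a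
  subsingleton, and then the mesh is \<open>0\<close>.\<close>
lemma oscillation_on_piece_le_mesh:
  assumes "l \<in> I" and "x \<in> P l" and "y \<in> P l"
  shows "\<bar>f y - f x\<bar> \<le> M * mesh P I"
proof (cases "M \<ge> 0")
  case True
  have "dist y x \<le> diameter (P l)"
    using diameter_bounded_bound pieces_bounded assms by blast
  also have "\<dots> \<le> mesh P I"
    unfolding mesh_def using finite_pieces assms(1) by simp
  finally have "M * dist y x \<le> M * mesh P I"
    using True by (rule mult_left_mono)
  then show ?thesis
    using lipschitz pieces_subset assms by (meson order_trans subsetD)
next
  case False
  have subsingleton: "a = b" if "a \<in> C" "b \<in> C" for a b
  proof -
    have "0 \<le> M * dist b a"
      using lipschitz[OF that] abs_ge_zero order_trans by blast
    with False show ?thesis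
      by (simp add: zero_le_mult_iff)
  qed
  have "P l' = {c l'}" if "l' \<in> I" for l'
    using that centers pieces_subset subsingleton by blast
  then have "(\<lambda>l. diameter (P l)) ` I = {0}"
    using assms(1) by force
  then have "mesh P I = 0"
    by (simp add: mesh_def)
  moreover have "x = y"
    using assms pieces_subset subsingleton by blast
  ultimately show ?thesis by simp
qed

lemma minimizer_in_good_piece:
  assumes "x\<^sub>0 \<in> (\<Union>l\<in>I. P l)" and minimal: "\<And>y. y \<in> C \<Longrightarrow> f x\<^sub>0 \<le> f y"
  shows "x\<^sub>0 \<in> (\<Union>l\<in>good_pieces f M P c I. P l)"
proof -
  obtain l\<^sub>0 where l\<^sub>0: "l\<^sub>0 \<in> I" "x\<^sub>0 \<in> P l\<^sub>0"
    using assms(1) by blast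
  have "f x\<^sub>0 \<le> f (c l)" if "l \<in> I" for l
    using minimal centers pieces_subset that by blast
  then have "f x\<^sub>0 \<le> Min ((\<lambda>l. f (c l)) ` I)"
    using finite_pieces l\<^sub>0(1) by (subst Min_ge_iff) auto
  moreover have "f (c l\<^sub>0) \<le> f x\<^sub>0 + M * mesh P I"
    using oscillation_on_piece_le_mesh[OF l\<^sub>0 centers[OF l\<^sub>0(1)]] by linarith
  ultimately have "l\<^sub>0 \<in> good_pieces f M P c I"
    unfolding good_pieces_def using l\<^sub>0(1) by (simp add: mult.commute)
  with l\<^sub>0(2) show ?thesis by blast
qed

lemma good_pieces_near_minimum:
  assumes "x\<^sub>0 \<in> (\<Union>l\<in>I. P l)" and "x \<in> (\<Union>l\<in>good_pieces f M P c I. P l)"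
  shows "f x \<le> f x\<^sub>0 + 3 * (M * mesh P I)"
proof -
  obtain l\<^sub>0 where l\<^sub>0: "l\<^sub>0 \<in> I" "x\<^sub>0 \<in> P l\<^sub>0"
    using assms(1) by blast
  obtain l where l: "l \<in> I" "x \<in> P l"
    and good: "f (c l) \<le> Min ((\<lambda>l. f (c l)) ` I) + mesh P I * M"
    using assms(2) unfolding good_pieces_def by blast
  have "f x \<le> f (c l) + M * mesh P I"
    using oscillation_on_piece_le_mesh[OF l centers[OF l(1)]] by linarith
  moreover have "Min ((\<lambda>l. f (c l)) ` I) \<le> f (c l\<^sub>0)"
    using finite_pieces l\<^sub>0(1) by simp
  moreover have "f (c l\<^sub>0) \<le> f x\<^sub>0 + M * mesh P I"
    using oscillation_on_piece_le_mesh[OF l\<^sub>0(1) l\<^sub>0(2) centers[OF l\<^sub>0(1)]] by linarith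
  ultimately show ?thesis
    using good by (simp add: mult.commute)
qed

end

lemma GrS_first:
  assumes "GrS C f M Cs L P c \<delta>"
  shows "Cs 1 = C"
  using assms unfolding GrS_def by (rule conjunct1)

lemma GrS_step:
  assumes "GrS C f M Cs L P c \<delta>" and "k \<ge> 1"
  shows "Cs k = (\<Union>l\<in>{1..L k}. P k l)"
    and "\<And>l. l \<in> {1..L k} \<Longrightarrow> P k l \<subseteq> C"
    and "\<And>l. l \<in> {1..L k} \<Longrightarrow> bounded (P k l)"
    and "\<And>l. l \<in> {1..L k} \<Longrightarrow> c k l \<in> P k l"
    and "\<delta> k = mesh (P k) {1..L k}"
    and "Cs (Suc k) = (\<Union>l\<in>good_pieces f M (P k) (c k) {1..L k}. P k l)"
proof -
  note step = mp[OF spec[OF conjunct2[OF assms(1)[unfolded GrS_def]], of k] assms(2),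
      folded mesh_def]
  from step show "Cs k = (\<Union>l\<in>{1..L k}. P k l)" by (elim conjE)
  from step show "\<And>l. l \<in> {1..L k} \<Longrightarrow> P k l \<subseteq> C" by blast
  from step show "\<And>l. l \<in> {1..L k} \<Longrightarrow> bounded (P k l)" by (blast intro: compact_imp_bounded)
  from step show "\<And>l. l \<in> {1..L k} \<Longrightarrow> c k l \<in> P k l" by blast
  from step show "\<delta> k = mesh (P k) {1..L k}" by (elim conjE)
  from step show "Cs (Suc k) = (\<Union>l\<in>good_pieces f M (P k) (c k) {1..L k}. P k l)"
    unfolding good_pieces_def by (elim conjE) simp
qed

context
  fixes C :: "'a::euclidean_space set" and f :: "'a \<Rightarrow> real" and M :: real and x\<^sub>0 :: 'a
    and Cs L P c \<delta>
  assumes GrS: "GrS C f M Cs L P c \<delta>"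
    and lipschitz: "\<And>x y. x \<in> C \<Longrightarrow> y \<in> C \<Longrightarrow> \<bar>f y - f x\<bar> \<le> M * dist y x"
    and minimizer: "x\<^sub>0 \<in> C" "\<And>y. y \<in> C \<Longrightarrow> f x\<^sub>0 \<le> f y"
begin

lemma GrS_minimizer_mem:
  assumes "k \<ge> 1"
  shows "x\<^sub>0 \<in> Cs k"
  using assms
proof (induction k rule: dec_induct)
  case base
  show ?case using GrS_first[OF GrS] minimizer(1) by simp
next
  case (step k)
  note pieces = GrS_step[OF GrS step.hyps(1)]
  have "x\<^sub>0 \<in> (\<Union>l\<in>{1..L k}. P k l)"
    using step.IH pieces(1) by simp
  from minimizer_in_good_piece[OF lipschitz finite_atLeastAtMost pieces(2-4) this minimizer(2)]
  show ?case
    using pieces(6) by simp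
qed

lemma GrS_near_minimum:
  assumes "k \<ge> 1" and "x \<in> Cs (Suc k)"
  shows "f x \<le> f x\<^sub>0 + 3 * (M * \<delta> k)"
proof -
  note pieces = GrS_step[OF GrS assms(1)]
  have "x\<^sub>0 \<in> (\<Union>l\<in>{1..L k}. P k l)"
    using GrS_minimizer_mem[OF assms(1)] pieces(1) by simp
  from good_pieces_near_minimum[OF lipschitz finite_atLeastAtMost pieces(2-4) this]
  show ?thesis
    using assms(2) pieces(5,6) by simp
qed

end

theorem theorem1:
  fixes C :: "(real ^ 'n) set" and f :: "real ^ 'n \<Rightarrow> real"
    and Cs :: "nat \<Rightarrow> (real ^ 'n) set" and L :: "nat \<Rightarrow> nat"
    and P :: "nat \<Rightarrow> nat \<Rightarrow> (real ^ 'n) set" and c :: "nat \<Rightarrow> nat \<Rightarrow> real ^ 'n"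
    and \<delta> :: "nat \<Rightarrow> real" and M0 v :: real
  assumes "C \<noteq> {}" and "compact C" and "path_connected C"
    and "continuous_on C f"
    and "bdd_above (lip_ratios f C)"
    and "M0 = Sup (lip_ratios f C)"
    and "v = (INF x\<in>C. f x)"
    and "GrS C f M0 Cs L P c \<delta>"
    and "\<delta> \<longlonglongrightarrow> 0"
  shows "(\<Inter>k\<in>{1..}. Cs k) \<noteq> {} \<and> f ` (\<Inter>k\<in>{1..}. Cs k) = {v}"
proof -
  obtain x\<^sub>0 where x\<^sub>0: "x\<^sub>0 \<in> C" "\<And>y. y \<in> C \<Longrightarrow> f x\<^sub>0 \<le> f y"
    using continuous_attains_inf[OF assms(2,1,4)] by blast
  have v: "v = f x\<^sub>0"
    unfolding assms(7) by (rule cInf_eq_minimum) (use x\<^sub>0 in auto)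
  note lipschitz = lip_ratios_bound[OF assms(5), folded assms(6)]
  note mem = GrS_minimizer_mem[OF assms(8) lipschitz x\<^sub>0]
  note near = GrS_near_minimum[OF assms(8) lipschitz x\<^sub>0]
  have "f x = v" if x: "x \<in> (\<Inter>k\<in>{1..}. Cs k)" for x
  proof (rule antisym)
    have "(\<lambda>k. f x\<^sub>0 + 3 * (M0 * \<delta> k)) \<longlonglongrightarrow> f x\<^sub>0 + 3 * (M0 * 0)"
      by (intro tendsto_intros assms(9))
    moreover have "\<forall>k\<ge>1. f x \<le> f x\<^sub>0 + 3 * (M0 * \<delta> k)"
      using near x by auto
    ultimately show "f x \<le> v"
      using LIMSEQ_le_const v by fastforce
    have "x \<in> C"
      using x GrS_first[OF assms(8)] by auto
    then show "v \<le> f x"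
      using x\<^sub>0(2) v by simp
  qed
  moreover have "x\<^sub>0 \<in> (\<Inter>k\<in>{1..}. Cs k)"
    using mem by auto
  ultimately show ?thesis by auto
qed

end
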